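(* Let $k$ be a positive integer, let $K=2^{3k+5}$, and let $G$ be a $K$-almost-regular graph on $n$ vertices with average degree $d(G)=Cn^{1/k}$ for some $C>0$. Then at most $\frac{2^{2k+10}}{\sqrt{C}}\hom(C_{2k},G)$ homomorphic $2k$-cycles in $G$ are degenerate.
   Context: A graph is $K$-almost-regular if its maximum degree is at most $K$ times its minimum degree. A homomorphic $2k$-cycle in $G$ is a sequence $(v_1,\dots,v_{2k})$ of vertices of $G$ such that $v_i$ is adjacent to $v_{i+1}$ for $i=1,\dots,2k-1$ and $v_{2k}$ is adjacent to $v_1$; it is non-degenerate if the $2k$ vertices are distinct and degenerate otherwise. $\hom(C_{2k},G)$ is the number of homomorphic $2k$-cycles in $G$. *)

theory Defs
  imports "HOL-Analysis.Analysis"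
begin

definition simple_graph :: "'a set \<Rightarrow> ('a \<Rightarrow> 'a \<Rightarrow> bool) \<Rightarrow> bool" where
  "simple_graph V E \<longleftrightarrow> finite V \<and> (\<forall>u v. E u v \<longrightarrow> u \<in> V \<and> v \<in> V)
     \<and> (\<forall>u v. E u v \<longrightarrow> E v u) \<and> (\<forall>v. \<not> E v v)"

definition degree :: "'a set \<Rightarrow> ('a \<Rightarrow> 'a \<Rightarrow> bool) \<Rightarrow> 'a \<Rightarrow> nat" where
  "degree V E v = card {u \<in> V. E v u}"

definition max_degree :: "'a set \<Rightarrow> ('a \<Rightarrow> 'a \<Rightarrow> bool) \<Rightarrow> nat" where
  "max_degree V E = Max (degree V E ` V)"

definition min_degree :: "'a set \<Rightarrow> ('a \<Rightarrow> 'a \<Rightarrow> bool) \<Rightarrow> nat" where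
  "min_degree V E = Min (degree V E ` V)"

definition average_degree :: "'a set \<Rightarrow> ('a \<Rightarrow> 'a \<Rightarrow> bool) \<Rightarrow> real" where
  "average_degree V E = (\<Sum>v\<in>V. real (degree V E v)) / real (card V)"

definition almost_regular :: "real \<Rightarrow> 'a set \<Rightarrow> ('a \<Rightarrow> 'a \<Rightarrow> bool) \<Rightarrow> bool" where
  "almost_regular K V E \<longleftrightarrow> real (max_degree V E) \<le> K * real (min_degree V E)"

text \<open>Homomorphic cycles of length m, as sequences indexed by 0..m-1
(i.e. v_1..v_m shifted), extended by undefined outside the index range.\<close>

definition hom_cycles :: "nat \<Rightarrow> 'a set \<Rightarrow> ('a \<Rightarrow> 'a \<Rightarrow> bool) \<Rightarrow> (nat \<Rightarrow> 'a) set" where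
  "hom_cycles m V E = {f \<in> {0..<m} \<rightarrow>\<^sub>E V. \<forall>i<m. E (f i) (f ((i + 1) mod m))}"

definition degenerate_hom_cycles :: "nat \<Rightarrow> 'a set \<Rightarrow> ('a \<Rightarrow> 'a \<Rightarrow> bool) \<Rightarrow> (nat \<Rightarrow> 'a) set" where
  "degenerate_hom_cycles m V E = {f \<in> hom_cycles m V E. \<not> inj_on f {0..<m}}"

definition hom_count :: "nat \<Rightarrow> 'a set \<Rightarrow> ('a \<Rightarrow> 'a \<Rightarrow> bool) \<Rightarrow> nat" where
  "hom_count m V E = card (hom_cycles m V E)"

end

theory Submission
  imports Defs
begin

text \<open>
  Write W_m(x,y) for the number of walks with m steps from x to y and
  T_j = sum_x W_(2j)(x,x) for the number of closed walks of length 2j.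
  A degenerate 2k-cycle visits some vertex x at two positions i < j, so it splits into
  closed walks at x of lengths a = j - i and 2k - a. By Cauchy-Schwarz the sequence
  j |-> W_(2j)(x,x) is log-convex, whence
  W_a(x,x) W_(2k-a)(x,x) <= W_2(x,x) W_(2k-2)(x,x) = deg(x) W_(2k-2)(x,x).
  Summing over x and the fewer than 4k^2 pairs (i,j) bounds the number of degenerate
  cycles by 4k^2 Delta T_(k-1).

  The sequence T_j is log-convex as well, with T_0 = n. Moreover T_k >= d^(2k): there are
  at least n d^(2k) walks of length 2k (log-convexity once more) and at most n T_k of them,
  because W_(2k)(u,v) is at most the mean of W_(2k)(u,u) and W_(2k)(v,v).
  Log-convexity gives T_k <= n (T_k / T_(k-1))^k, so d^k = C^k n forces
  T_k / T_(k-1) >= C d. With Delta <= K d from almost-regularity this yields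
  Delta T_(k-1) <= (K/C) T_k = (K/C) hom(C_2k, G). Finally 4k^2 K / C <= 2^(2k+10) / sqrt C
  once sqrt C > 2^(2k+10), and for smaller C the claimed bound exceeds hom(C_2k, G) anyway.
\<close>

section \<open>Positive log-convex sequences\<close>

definition pos_log_convex_seq :: "(nat \<Rightarrow> real) \<Rightarrow> bool" where
  "pos_log_convex_seq f \<longleftrightarrow> (\<forall>j. 0 < f j) \<and> (\<forall>j. f (Suc j) ^ 2 \<le> f j * f (Suc (Suc j)))"

lemma pos_log_convex_seq_ratio_mono:
  assumes "pos_log_convex_seq f"
  shows "incseq (\<lambda>j. f (Suc j) / f j)"
proof (rule incseq_SucI)
  fix j
  have "f (Suc j) * f (Suc j) \<le> f j * f (Suc (Suc j))" and "0 < f j" "0 < f (Suc j)"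
    using assms by (auto simp: pos_log_convex_seq_def power2_eq_square)
  then show "f (Suc j) / f j \<le> f (Suc (Suc j)) / f (Suc j)"
    by (simp add: divide_simps mult.commute)
qed

lemma pos_log_convex_seq_shift:
  assumes f: "pos_log_convex_seq f" and "a \<le> b"
  shows "f (a + s) * f b \<le> f a * f (b + s)"
proof -
  have pos: "0 < f j" for j using f by (simp add: pos_log_convex_seq_def)
  then have nonzero: "f j \<noteq> 0" for j by (metis less_irrefl)
  have "f (a + s) / f a \<le> f (b + s) / f b"
  proof (induction s)
    case (Suc s)
    have "f (a + s) / f a * (f (Suc (a + s)) / f (a + s)) \<le> f (b + s) / f b * (f (Suc (b + s)) / f (b + s))"
      using Suc pos incseqD[OF pos_log_convex_seq_ratio_mono[OF f], of "a + s" "b + s"] \<open>a \<le> b\<close>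
      by (intro mult_mono) (auto intro: less_imp_le)
    then show ?case using nonzero by simp
  qed (use nonzero in simp)
  then show ?thesis using pos[of a] pos[of b] by (simp add: divide_simps mult.commute)
qed

lemma pos_log_convex_seq_mult_le:
  assumes "pos_log_convex_seq f" "1 \<le> i" "1 \<le> j"
  shows "f i * f j \<le> f 1 * f (i + j - 1)"
  using pos_log_convex_seq_shift[OF assms(1) assms(3), of "i - 1"] assms(2,3) by (simp add: add.commute)

lemma pos_log_convex_seq_ge_geometric:
  assumes f: "pos_log_convex_seq f"
  shows "f 0 * (f 1 / f 0) ^ j \<le> f j"
proof (induction j)
  case (Suc j)
  have pos: "0 < f 0" "0 < f 1" using f by (auto simp: pos_log_convex_seq_def)
  have "f 0 * (f 1 / f 0) ^ j * f 1 \<le> f j * f 1"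
    using Suc pos by (simp add: mult_right_mono)
  also have "\<dots> \<le> f 0 * f (Suc j)"
    using pos_log_convex_seq_shift[OF f, of 0 j 1] by (simp add: mult.commute)
  finally show ?case using pos by (simp add: field_simps)
qed simp

lemma pos_log_convex_seq_le_geometric:
  assumes f: "pos_log_convex_seq f" and "j \<le> Suc k"
  shows "f j \<le> f 0 * (f (Suc k) / f k) ^ j"
  using \<open>j \<le> Suc k\<close>
proof (induction j)
  case (Suc j)
  have pos: "0 < f k" "0 < f (Suc k)" using f by (auto simp: pos_log_convex_seq_def)
  have "f (Suc j) * f k \<le> f j * f (Suc k)"
    using pos_log_convex_seq_shift[OF f, of j k 1] Suc.prems by simp
  then have "f (Suc j) \<le> f j * (f (Suc k) / f k)"
    using pos by (simp add: field_simps)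
  also have "\<dots> \<le> f 0 * (f (Suc k) / f k) ^ j * (f (Suc k) / f k)"
    using Suc pos by (intro mult_right_mono) auto
  finally show ?case by (simp add: ac_simps)
qed simp

section \<open>Walks and homomorphic cycles\<close>

lemma card_eq_sum_card_fibres:
  assumes "finite S" "finite R" "f ` S \<subseteq> R"
  shows "real (card S) = (\<Sum>y\<in>R. real (card {x \<in> S. f x = y}))"
  using sum_fun_comp[OF assms, where f = "\<lambda>_. 1 :: real"] by simp

definition walks :: "'a set \<Rightarrow> ('a \<Rightarrow> 'a \<Rightarrow> bool) \<Rightarrow> nat \<Rightarrow> (nat \<Rightarrow> 'a) set" where
  "walks V E m = {g \<in> {0..m} \<rightarrow>\<^sub>E V. \<forall>i<m. E (g i) (g (Suc i))}"

lemma mem_walks_iff: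
  "g \<in> walks V E m \<longleftrightarrow>
     (\<forall>t\<le>m. g t \<in> V) \<and> (\<forall>t>m. g t = undefined) \<and> (\<forall>i<m. E (g i) (g (Suc i)))"
  by (auto simp: walks_def PiE_def extensional_def Pi_def)

lemma walks_in_V: "g \<in> walks V E m \<Longrightarrow> t \<le> m \<Longrightarrow> g t \<in> V"
  by (simp add: mem_walks_iff)

lemma finite_walks: "finite V \<Longrightarrow> finite (walks V E m)"
  by (rule finite_subset[of _ "{0..m} \<rightarrow>\<^sub>E V"]) (auto simp: walks_def intro: finite_PiE)

text \<open>No cut-off at the end is needed: a walk \<open>h2\<close> with q steps is \<^const>\<open>undefined\<close> beyond q.\<close>

definition walk_append :: "nat \<Rightarrow> (nat \<Rightarrow> 'a) \<Rightarrow> (nat \<Rightarrow> 'a) \<Rightarrow> nat \<Rightarrow> 'a" where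
  "walk_append p h1 h2 t = (if t \<le> p then h1 t else h2 (t - p))"

lemma bij_betw_walks_split:
  "bij_betw (\<lambda>g. (restrict g {0..p}, restrict (\<lambda>t. g (p + t)) {0..q})) (walks V E (p + q))
     {(h1, h2) \<in> walks V E p \<times> walks V E q. h1 p = h2 0}"
proof (rule bij_betw_byWitness[where f' = "\<lambda>(h1, h2). walk_append p h1 h2"])
  show "\<forall>g\<in>walks V E (p + q).
          (\<lambda>(h1, h2). walk_append p h1 h2) (restrict g {0..p}, restrict (\<lambda>t. g (p + t)) {0..q}) = g"
    by (auto simp: walk_append_def mem_walks_iff fun_eq_iff)
  show "\<forall>h\<in>{(h1, h2) \<in> walks V E p \<times> walks V E q. h1 p = h2 0}.
          (\<lambda>g. (restrict g {0..p}, restrict (\<lambda>t. g (p + t)) {0..q})) ((\<lambda>(h1, h2). walk_append p h1 h2) h) = h"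
    by (force simp: walk_append_def mem_walks_iff fun_eq_iff)
  show "(\<lambda>g. (restrict g {0..p}, restrict (\<lambda>t. g (p + t)) {0..q})) ` walks V E (p + q)
          \<subseteq> {(h1, h2) \<in> walks V E p \<times> walks V E q. h1 p = h2 0}"
    by (auto simp: mem_walks_iff)
  show "(\<lambda>(h1, h2). walk_append p h1 h2) ` {(h1, h2) \<in> walks V E p \<times> walks V E q. h1 p = h2 0}
          \<subseteq> walks V E (p + q)"
  proof clarify
    fix h1 h2 assume h1: "h1 \<in> walks V E p" and h2: "h2 \<in> walks V E q" and join: "h1 p = h2 0"
    have "E (walk_append p h1 h2 i) (walk_append p h1 h2 (Suc i))" if "i < p + q" for i
    proof (cases "i < p")
      case True then show ?thesis using h1 by (auto simp: walk_append_def mem_walks_iff)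
    next
      case False
      then have "E (h2 (i - p)) (h2 (Suc (i - p)))" using h2 that by (auto simp: mem_walks_iff)
      then show ?thesis using False join by (auto simp: walk_append_def Suc_diff_le le_Suc_eq)
    qed
    then show "walk_append p h1 h2 \<in> walks V E (p + q)"
      using h1 h2 by (auto simp: walk_append_def mem_walks_iff)
  qed
qed

lemma card_walks_split:
  "card {g \<in> walks V E (p + q). g p = x \<and> P (restrict g {0..p}) \<and> Q (restrict (\<lambda>t. g (p + t)) {0..q})}
     = card {h \<in> walks V E p. h p = x \<and> P h} * card {h \<in> walks V E q. h 0 = x \<and> Q h}"
proof -
  have "bij_betw (\<lambda>g. (restrict g {0..p}, restrict (\<lambda>t. g (p + t)) {0..q}))
          {g \<in> walks V E (p + q). g p = x \<and> P (restrict g {0..p}) \<and> Q (restrict (\<lambda>t. g (p + t)) {0..q})}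
          {h \<in> {(h1, h2) \<in> walks V E p \<times> walks V E q. h1 p = h2 0}. fst h p = x \<and> P (fst h) \<and> Q (snd h)}"
    by (rule bij_betw_Collect[OF bij_betw_walks_split]) auto
  also have "{h \<in> {(h1, h2) \<in> walks V E p \<times> walks V E q. h1 p = h2 0}. fst h p = x \<and> P (fst h) \<and> Q (snd h)}
      = {h \<in> walks V E p. h p = x \<and> P h} \<times> {h \<in> walks V E q. h 0 = x \<and> Q h}"
    by auto
  finally show ?thesis by (subst card_cartesian_product[symmetric]) (rule bij_betw_same_card)
qed

definition walk_count :: "'a set \<Rightarrow> ('a \<Rightarrow> 'a \<Rightarrow> bool) \<Rightarrow> nat \<Rightarrow> 'a \<Rightarrow> 'a \<Rightarrow> real" where
  "walk_count V E m u v = real (card {g \<in> walks V E m. g 0 = u \<and> g m = v})"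

lemma walk_count_nonneg: "0 \<le> walk_count V E m u v"
  by (simp add: walk_count_def)

lemma walk_count_add:
  assumes "finite V"
  shows "walk_count V E (p + q) u v = (\<Sum>w\<in>V. walk_count V E p u w * walk_count V E q w v)"
proof -
  let ?W = "{g \<in> walks V E (p + q). g 0 = u \<and> g (p + q) = v}"
  have "walk_count V E (p + q) u v = (\<Sum>w\<in>V. real (card {g \<in> ?W. g p = w}))"
    unfolding walk_count_def
    by (rule card_eq_sum_card_fibres) (auto simp: finite_walks assms walks_in_V)
  also have "\<dots> = (\<Sum>w\<in>V. walk_count V E p u w * walk_count V E q w v)"
  proof (rule sum.cong[OF refl])
    fix w
    show "real (card {g \<in> ?W. g p = w}) = walk_count V E p u w * walk_count V E q w v"
      using card_walks_split[of V E p q w "\<lambda>h. h 0 = u" "\<lambda>h. h q = v"]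
      by (simp add: walk_count_def conj_ac)
  qed
  finally show ?thesis .
qed

lemma walk_count_0: "walk_count V E 0 u v = (if u = v \<and> u \<in> V then 1 else 0)"
proof -
  have "{g \<in> walks V E 0. g 0 = u \<and> g 0 = v} = (if u = v \<and> u \<in> V then {restrict (\<lambda>_. u) {0}} else {})"
    by (auto simp: mem_walks_iff fun_eq_iff)
  then show ?thesis by (auto simp: walk_count_def)
qed

lemma card_walks_through_two_points:
  "real (card {g \<in> walks V E (p + q + r). g 0 = u \<and> g p = x \<and> g (p + q) = y \<and> g (p + q + r) = v})
     = walk_count V E p u x * walk_count V E q x y * walk_count V E r y v"
proof -
  have "card {g \<in> walks V E (p + (q + r)). g p = x \<and> g 0 = u \<and> g (p + q) = y \<and> g (p + (q + r)) = v}
      = card {h \<in> walks V E p. h p = x \<and> h 0 = u} * card {h \<in> walks V E (q + r). h 0 = x \<and> h q = y \<and> h (q + r) = v}"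
    using card_walks_split[of V E p "q + r" x "\<lambda>h. h 0 = u" "\<lambda>h. h q = y \<and> h (q + r) = v"] by simp
  moreover have "card {h \<in> walks V E (q + r). h 0 = x \<and> h q = y \<and> h (q + r) = v}
      = card {h \<in> walks V E q. h q = y \<and> h 0 = x} * card {h \<in> walks V E r. h 0 = y \<and> h r = v}"
    using card_walks_split[of V E q r y "\<lambda>h. h 0 = x" "\<lambda>h. h r = v"] by (simp add: conj_ac)
  ultimately show ?thesis
    by (simp add: walk_count_def add.assoc conj_ac)
qed

lemma finite_hom_cycles: "finite V \<Longrightarrow> finite (hom_cycles m V E)"
  by (rule finite_subset[of _ "{0..<m} \<rightarrow>\<^sub>E V"]) (auto simp: hom_cycles_def intro: finite_PiE)

lemma bij_betw_closed_walks_hom_cycles: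
  assumes "0 < m"
  shows "bij_betw (\<lambda>g. restrict g {0..<m}) {g \<in> walks V E m. g 0 = g m} (hom_cycles m V E)"
proof (rule bij_betw_byWitness[where f' = "\<lambda>f t. if t \<le> m then f (t mod m) else undefined"])
  show "\<forall>g\<in>{g \<in> walks V E m. g 0 = g m}.
          (\<lambda>t. if t \<le> m then restrict g {0..<m} (t mod m) else undefined) = g"
    using assms by (auto simp: mem_walks_iff fun_eq_iff le_less)
  show "\<forall>f\<in>hom_cycles m V E. restrict (\<lambda>t. if t \<le> m then f (t mod m) else undefined) {0..<m} = f"
    by (auto simp: hom_cycles_def fun_eq_iff PiE_def extensional_def)
  show "(\<lambda>g. restrict g {0..<m}) ` {g \<in> walks V E m. g 0 = g m} \<subseteq> hom_cycles m V E"
  proof clarify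
    fix g assume g: "g \<in> walks V E m" "g 0 = g m"
    have "E (g i) (g (Suc i mod m))" if "i < m" for i
      using g that by (cases "Suc i = m") (auto simp: mem_walks_iff)
    then show "restrict g {0..<m} \<in> hom_cycles m V E"
      using g assms by (auto simp: hom_cycles_def mem_walks_iff)
  qed
  show "(\<lambda>f t. if t \<le> m then f (t mod m) else undefined) ` hom_cycles m V E \<subseteq> {g \<in> walks V E m. g 0 = g m}"
  proof (rule image_subsetI)
    fix f assume f: "f \<in> hom_cycles m V E"
    have "E (f (i mod m)) (f (Suc i mod m))" if "i < m" for i
      using f that by (auto simp: hom_cycles_def)
    then show "(\<lambda>t. if t \<le> m then f (t mod m) else undefined) \<in> {g \<in> walks V E m. g 0 = g m}"
      using f assms by (auto simp: hom_cycles_def mem_walks_iff)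
  qed
qed

lemma hom_count_eq_sum_walk_count:
  assumes "finite V" "0 < m"
  shows "real (hom_count m V E) = (\<Sum>x\<in>V. walk_count V E m x x)"
proof -
  have "hom_count m V E = card {g \<in> walks V E m. g 0 = g m}"
    unfolding hom_count_def using bij_betw_same_card[OF bij_betw_closed_walks_hom_cycles[OF assms(2), of V E]] by simp
  also have "real \<dots> = (\<Sum>x\<in>V. real (card {g \<in> {g \<in> walks V E m. g 0 = g m}. g 0 = x}))"
    by (rule card_eq_sum_card_fibres) (auto simp: finite_walks assms walks_in_V)
  also have "\<dots> = (\<Sum>x\<in>V. walk_count V E m x x)"
    unfolding walk_count_def by (intro sum.cong refl arg_cong[where f = "\<lambda>A. real (card A)"]) auto
  finally show ?thesis .
qed

lemma card_hom_cycles_repeat: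
  assumes "finite V" "i < j" "j < m"
  shows "real (card {f \<in> hom_cycles m V E. f i = f j})
           = (\<Sum>x\<in>V. walk_count V E (j - i) x x * walk_count V E (m - (j - i)) x x)"
proof -
  let ?C = "{g \<in> walks V E m. g 0 = g m \<and> g i = g j}"
  have m_split: "m = i + (j - i) + (m - j)" using assms by simp
  have "bij_betw (\<lambda>g. restrict g {0..<m}) ?C {f \<in> hom_cycles m V E. f i = f j}"
    using bij_betw_Collect[OF bij_betw_closed_walks_hom_cycles, of m V E "\<lambda>g. g i = g j" "\<lambda>f. f i = f j"] assms
    by (simp add: conj_ac)
  then have "real (card {f \<in> hom_cycles m V E. f i = f j}) = real (card ?C)"
    by (simp add: bij_betw_same_card)
  also have "\<dots> = (\<Sum>v\<in>V. real (card {g \<in> ?C. g 0 = v}))"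
    by (rule card_eq_sum_card_fibres) (auto simp: finite_walks assms walks_in_V)
  also have "\<dots> = (\<Sum>v\<in>V. \<Sum>x\<in>V. real (card {g \<in> {g \<in> ?C. g 0 = v}. g i = x}))"
    by (intro sum.cong refl card_eq_sum_card_fibres) (use assms in \<open>auto simp: finite_walks walks_in_V\<close>)
  also have "\<dots> = (\<Sum>v\<in>V. \<Sum>x\<in>V. walk_count V E i v x * walk_count V E (j - i) x x * walk_count V E (m - j) x v)"
  proof (intro sum.cong refl)
    fix v x
    have "{g \<in> {g \<in> ?C. g 0 = v}. g i = x}
        = {g \<in> walks V E (i + (j - i) + (m - j)). g 0 = v \<and> g i = x \<and> g (i + (j - i)) = x \<and> g (i + (j - i) + (m - j)) = v}"
      using assms m_split by auto
    then show "real (card {g \<in> {g \<in> ?C. g 0 = v}. g i = x})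
        = walk_count V E i v x * walk_count V E (j - i) x x * walk_count V E (m - j) x v"
      by (simp only: card_walks_through_two_points)
  qed
  also have "\<dots> = (\<Sum>x\<in>V. walk_count V E (j - i) x x * (\<Sum>v\<in>V. walk_count V E (m - j) x v * walk_count V E i v x))"
    by (subst sum.swap) (simp add: sum_distrib_left ac_simps)
  also have "\<dots> = (\<Sum>x\<in>V. walk_count V E (j - i) x x * walk_count V E (m - (j - i)) x x)"
    using assms by (simp add: walk_count_add[symmetric] Nat.add_diff_assoc2 add.commute)
  finally show ?thesis .
qed

lemma card_degenerate_hom_cycles_le_hom_count:
  "finite V \<Longrightarrow> card (degenerate_hom_cycles m V E) \<le> hom_count m V E"
  unfolding hom_count_def degenerate_hom_cycles_def by (intro card_mono finite_hom_cycles) auto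

lemma degenerate_hom_cycles_subset:
  "degenerate_hom_cycles m V E
     \<subseteq> (\<Union>(i, j)\<in>{(i, j) \<in> {0..<m} \<times> {0..<m}. i < j}. {f \<in> hom_cycles m V E. f i = f j})"
  (is "_ \<subseteq> (\<Union>(i, j)\<in>?P. ?rep i j)")
proof
  fix f assume "f \<in> degenerate_hom_cycles m V E"
  then obtain i j where "f \<in> hom_cycles m V E" "i < m" "j < m" "i \<noteq> j" "f i = f j"
    by (auto simp: degenerate_hom_cycles_def inj_on_def)
  then have "f \<in> ?rep i j" "f \<in> ?rep j i" "(i, j) \<in> ?P \<or> (j, i) \<in> ?P"
    by auto
  then show "f \<in> (\<Union>(i, j)\<in>?P. ?rep i j)" by blast
qed

section \<open>Walk counts in simple graphs\<close>

locale sgraph =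
  fixes V :: "'a set" and E :: "'a \<Rightarrow> 'a \<Rightarrow> bool"
  assumes simple_graph: "simple_graph V E"
begin

lemma finite_V: "finite V"
  using simple_graph by (simp add: simple_graph_def)

lemma adj_in_V: "E u v \<Longrightarrow> u \<in> V \<and> v \<in> V"
  using simple_graph by (simp add: simple_graph_def)

lemma adj_sym: "E u v \<Longrightarrow> E v u"
  using simple_graph by (simp add: simple_graph_def)

lemma not_adj_self: "\<not> E v v"
  using simple_graph by (simp add: simple_graph_def)

lemma walk_reverse_in_walks:
  assumes "g \<in> walks V E m"
  shows "restrict (\<lambda>t. g (m - t)) {0..m} \<in> walks V E m"
proof -
  have "E (g (m - i)) (g (m - Suc i))" if "i < m" for i
  proof -
    have "E (g (m - Suc i)) (g (Suc (m - Suc i)))" using assms that by (simp add: mem_walks_iff)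
    then show ?thesis using Suc_diff_Suc[OF that] by (simp add: adj_sym)
  qed
  then show ?thesis using assms by (auto simp: mem_walks_iff)
qed

lemma walk_count_sym: "walk_count V E m u v = walk_count V E m v u"
proof -
  let ?rev = "\<lambda>g. restrict (\<lambda>t. g (m - t)) {0..m}"
  have "bij_betw ?rev {g \<in> walks V E m. g 0 = u \<and> g m = v} {g \<in> walks V E m. g 0 = v \<and> g m = u}"
    by (rule bij_betw_byWitness[where f' = ?rev])
      (auto simp: walk_reverse_in_walks, auto simp: mem_walks_iff fun_eq_iff)
  then show ?thesis by (simp add: walk_count_def bij_betw_same_card)
qed

text \<open>Stated for \<^term>\<open>Suc 0\<close>, the simp normal form of \<^term>\<open>1 :: nat\<close>.\<close>

lemma walk_count_1: "walk_count V E (Suc 0) u v = (if E u v then 1 else 0)"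
proof -
  have "{g \<in> walks V E (Suc 0). g 0 = u \<and> g (Suc 0) = v}
      = (if E u v then {restrict (\<lambda>t. if t = 0 then u else v) {0..1}} else {})"
    using adj_in_V by (auto simp: mem_walks_iff fun_eq_iff le_Suc_eq)
  then show ?thesis by (simp add: walk_count_def)
qed

lemma walk_count_2_self: "walk_count V E 2 x x = real (degree V E x)"
proof -
  have "walk_count V E 2 x x = (\<Sum>w\<in>V. walk_count V E (Suc 0) x w * walk_count V E (Suc 0) w x)"
    using walk_count_add[OF finite_V, of E "Suc 0" "Suc 0" x x] by (simp add: numeral_2_eq_2)
  also have "\<dots> = (\<Sum>w\<in>V. if E x w then 1 else 0)"
    unfolding walk_count_1 by (intro sum.cong refl) (auto dest: adj_sym)
  finally show ?thesis
    using finite_V by (simp add: sum.If_cases Int_def degree_def)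
qed

lemma walk_count_self_add:
  "walk_count V E (s + t) x x = (\<Sum>w\<in>V. walk_count V E s x w * walk_count V E t x w)"
  using walk_count_add[OF finite_V, of E s t x x] by (simp add: walk_count_sym[of t _ x])

lemma walk_count_double_self: "walk_count V E (2 * s) x x = (\<Sum>w\<in>V. walk_count V E s x w ^ 2)"
  using walk_count_self_add[of s s x] by (simp add: mult_2 power2_eq_square)

lemma walk_count_self_sq_le:
  "walk_count V E (s + t) x x ^ 2 \<le> walk_count V E (2 * s) x x * walk_count V E (2 * t) x x"
  unfolding walk_count_self_add walk_count_double_self by (rule Cauchy_Schwarz_ineq_sum)

lemma walk_count_even_self_pos:
  assumes "E x w"
  shows "0 < walk_count V E (2 * j) x x"
proof -
  let ?g = "restrict (\<lambda>t. if even t then x else w) {0..2 * j}"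
  have "?g \<in> {g \<in> walks V E (2 * j). g 0 = x \<and> g (2 * j) = x}"
    using assms adj_in_V adj_sym by (auto simp: mem_walks_iff)
  then have "{g \<in> walks V E (2 * j). g 0 = x \<and> g (2 * j) = x} \<noteq> {}" by blast
  then show ?thesis
    unfolding walk_count_def using finite_walks[OF finite_V] by (simp add: card_gt_0_iff)
qed

lemma pos_log_convex_walk_count_self:
  assumes "E x w"
  shows "pos_log_convex_seq (\<lambda>j. walk_count V E (2 * j) x x)"
  unfolding pos_log_convex_seq_def
  using walk_count_even_self_pos[OF assms] walk_count_self_sq_le[of j "Suc (Suc j)" x for j]
  by (simp add: mult_2)

lemma walk_count_odd_self_mult_le:
  assumes "E x w" "1 \<le> i" "1 \<le> j"
  shows "walk_count V E (2 * i + 1) x x * walk_count V E (2 * j + 1) x x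
           \<le> real (degree V E x) * walk_count V E (2 * (i + j)) x x"
proof -
  define y where "y j = walk_count V E (2 * j) x x" for j
  have y: "pos_log_convex_seq y"
    unfolding y_def by (rule pos_log_convex_walk_count_self[OF assms(1)])
  have y_pos: "0 < y j" for j using y by (simp add: pos_log_convex_seq_def)
  have sq_a: "walk_count V E (2 * i + 1) x x ^ 2 \<le> y i * y (i + 1)"
    using walk_count_self_sq_le[of i "i + 1" x] by (simp add: y_def mult_2)
  have sq_b: "walk_count V E (2 * j + 1) x x ^ 2 \<le> y j * y (j + 1)"
    using walk_count_self_sq_le[of j "j + 1" x] by (simp add: y_def mult_2)
  have "(walk_count V E (2 * i + 1) x x * walk_count V E (2 * j + 1) x x) ^ 2
      = walk_count V E (2 * i + 1) x x ^ 2 * walk_count V E (2 * j + 1) x x ^ 2"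
    by (simp add: power_mult_distrib)
  also have "\<dots> \<le> (y i * y (i + 1)) * (y j * y (j + 1))"
    using sq_a sq_b y_pos by (intro mult_mono) (auto intro: less_imp_le)
  also have "\<dots> = (y i * y (j + 1)) * (y (i + 1) * y j)"
    by (simp add: ac_simps)
  also have "\<dots> \<le> (y 1 * y (i + j)) * (y 1 * y (i + j))"
  proof (rule mult_mono)
    show "y i * y (j + 1) \<le> y 1 * y (i + j)"
      using pos_log_convex_seq_mult_le[OF y, of i "j + 1"] assms by simp
    show "y (i + 1) * y j \<le> y 1 * y (i + j)"
      using pos_log_convex_seq_mult_le[OF y, of "i + 1" j] assms by simp
  qed (simp_all add: less_imp_le y_pos)
  also have "\<dots> = (y 1 * y (i + j)) ^ 2"
    by (simp add: power2_eq_square)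
  finally have "walk_count V E (2 * i + 1) x x * walk_count V E (2 * j + 1) x x \<le> y 1 * y (i + j)"
    by (rule power2_le_imp_le) (simp add: less_imp_le y_pos)
  then show ?thesis by (simp add: y_def walk_count_2_self)
qed

lemma walk_count_self_mult_le:
  assumes "E x w" "0 < a" "0 < b" "even (a + b)"
  shows "walk_count V E a x x * walk_count V E b x x \<le> real (degree V E x) * walk_count V E (a + b - 2) x x"
proof (cases "even a")
  case True
  then obtain i j where ij: "a = 2 * i" "b = 2 * j" using assms(4) by (metis evenE even_add)
  then have "walk_count V E (2 * i) x x * walk_count V E (2 * j) x x
      \<le> walk_count V E (2 * 1) x x * walk_count V E (2 * (i + j - 1)) x x"
    using pos_log_convex_seq_mult_le[OF pos_log_convex_walk_count_self[OF assms(1)], of i j] assms by simp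
  moreover have "a + b - 2 = 2 * (i + j - 1)" using ij assms by simp
  ultimately show ?thesis by (simp add: ij walk_count_2_self)
next
  case False
  then obtain i j where ij: "a = 2 * i + 1" "b = 2 * j + 1" using assms(4) by (metis oddE even_add)
  show ?thesis
  proof (cases "i = 0 \<or> j = 0")
    case True
    have "walk_count V E 1 x x = 0" by (simp add: walk_count_1 not_adj_self)
    then have "walk_count V E a x x * walk_count V E b x x = 0" using True ij by auto
    then show ?thesis by (metis walk_count_nonneg mult_nonneg_nonneg of_nat_0_le_iff)
  next
    case False
    then show ?thesis using walk_count_odd_self_mult_le[OF assms(1), of i j] ij by simp
  qed
qed

definition closed_walks_total :: "nat \<Rightarrow> real" where
  "closed_walks_total m = (\<Sum>x\<in>V. walk_count V E m x x)"

definition walks_total :: "nat \<Rightarrow> real" where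
  "walks_total m = (\<Sum>u\<in>V. \<Sum>v\<in>V. walk_count V E m u v)"

lemma closed_walks_total_0: "closed_walks_total 0 = real (card V)"
  by (simp add: closed_walks_total_def walk_count_0)

lemma walks_total_0: "walks_total 0 = real (card V)"
  using finite_V by (simp add: walks_total_def walk_count_0 sum.If_cases Int_def)

lemma walks_total_add:
  "walks_total (s + t) = (\<Sum>w\<in>V. (\<Sum>u\<in>V. walk_count V E s w u) * (\<Sum>v\<in>V. walk_count V E t w v))"
proof -
  have "walks_total (s + t) = (\<Sum>u\<in>V. \<Sum>v\<in>V. \<Sum>w\<in>V. walk_count V E s u w * walk_count V E t w v)"
    by (simp add: walks_total_def walk_count_add[OF finite_V])
  also have "\<dots> = (\<Sum>u\<in>V. \<Sum>w\<in>V. \<Sum>v\<in>V. walk_count V E s u w * walk_count V E t w v)"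
    by (rule sum.cong[OF refl], rule sum.swap)
  also have "\<dots> = (\<Sum>w\<in>V. \<Sum>u\<in>V. \<Sum>v\<in>V. walk_count V E s u w * walk_count V E t w v)"
    by (rule sum.swap)
  also have "\<dots> = (\<Sum>w\<in>V. (\<Sum>u\<in>V. walk_count V E s u w) * (\<Sum>v\<in>V. walk_count V E t w v))"
    by (simp add: sum_product)
  also have "\<dots> = (\<Sum>w\<in>V. (\<Sum>u\<in>V. walk_count V E s w u) * (\<Sum>v\<in>V. walk_count V E t w v))"
    by (intro sum.cong refl arg_cong2[where f = "(*)"] walk_count_sym)
  finally show ?thesis .
qed

lemma walks_total_2: "walks_total 2 = (\<Sum>w\<in>V. real (degree V E w) ^ 2)"
proof -
  have "(\<Sum>u\<in>V. walk_count V E (Suc 0) w u) = real (degree V E w)" for w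
    using finite_V by (simp add: walk_count_1 sum.If_cases Int_def degree_def)
  then show ?thesis
    using walks_total_add[of "Suc 0" "Suc 0"] by (simp add: numeral_2_eq_2 power2_eq_square)
qed

lemma closed_walks_total_sq_le:
  "closed_walks_total (s + t) ^ 2 \<le> closed_walks_total (2 * s) * closed_walks_total (2 * t)"
proof -
  have "closed_walks_total (s + t) = (\<Sum>p\<in>V \<times> V. walk_count V E s (fst p) (snd p) * walk_count V E t (fst p) (snd p))"
    by (simp add: closed_walks_total_def walk_count_self_add sum.cartesian_product case_prod_beta)
  moreover have "closed_walks_total (2 * r) = (\<Sum>p\<in>V \<times> V. walk_count V E r (fst p) (snd p) ^ 2)" for r
    by (simp add: closed_walks_total_def walk_count_double_self sum.cartesian_product case_prod_beta)
  ultimately show ?thesis by (simp add: Cauchy_Schwarz_ineq_sum)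
qed

lemma walks_total_sq_le: "walks_total (s + t) ^ 2 \<le> walks_total (2 * s) * walks_total (2 * t)"
  unfolding walks_total_add mult_2 by (simp add: Cauchy_Schwarz_ineq_sum flip: power2_eq_square)

lemma walks_total_le_closed_walks_total:
  "walks_total (2 * k) \<le> real (card V) * closed_walks_total (2 * k)"
proof -
  have am_gm: "a * b \<le> (a ^ 2 + b ^ 2) / 2" for a b :: real
    using sum_squares_bound[of a b] by simp
  have "walk_count V E (2 * k) u v \<le> (walk_count V E (2 * k) u u + walk_count V E (2 * k) v v) / 2" for u v
  proof -
    have "walk_count V E (2 * k) u v = (\<Sum>w\<in>V. walk_count V E k u w * walk_count V E k v w)"
      using walk_count_add[OF finite_V, of E k k u v] by (simp add: mult_2 walk_count_sym[of k _ v])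
    also have "\<dots> \<le> (\<Sum>w\<in>V. (walk_count V E k u w ^ 2 + walk_count V E k v w ^ 2) / 2)"
      by (intro sum_mono am_gm)
    also have "\<dots> = (walk_count V E (2 * k) u u + walk_count V E (2 * k) v v) / 2"
      by (simp add: walk_count_double_self sum.distrib flip: sum_divide_distrib)
    finally show ?thesis .
  qed
  then have "walks_total (2 * k) \<le> (\<Sum>u\<in>V. \<Sum>v\<in>V. (walk_count V E (2 * k) u u + walk_count V E (2 * k) v v) / 2)"
    unfolding walks_total_def by (intro sum_mono)
  also have "\<dots> = real (card V) * closed_walks_total (2 * k)"
    by (simp add: closed_walks_total_def sum.distrib sum_divide_distrib[symmetric] sum_distrib_left[symmetric])
  finally show ?thesis .
qed

lemma closed_walks_total_le_walks_total: "closed_walks_total m \<le> walks_total m"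
  unfolding closed_walks_total_def walks_total_def
  by (intro sum_mono member_le_sum) (auto simp: walk_count_nonneg finite_V)

lemma degree_le_max_degree: "v \<in> V \<Longrightarrow> degree V E v \<le> max_degree V E"
  unfolding max_degree_def using finite_V by simp

lemma min_degree_le_degree: "v \<in> V \<Longrightarrow> min_degree V E \<le> degree V E v"
  unfolding min_degree_def using finite_V by simp

lemma min_degree_le_average_degree:
  assumes "V \<noteq> {}"
  shows "real (min_degree V E) \<le> average_degree V E"
proof -
  have "(\<Sum>v\<in>V. real (min_degree V E)) \<le> (\<Sum>v\<in>V. real (degree V E v))"
    by (intro sum_mono) (simp add: min_degree_le_degree)
  then show ?thesis
    using assms finite_V by (simp add: average_degree_def field_simps card_gt_0_iff)
qed

lemma average_degree_le_max_degree:
  assumes "V \<noteq> {}"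
  shows "average_degree V E \<le> real (max_degree V E)"
proof -
  have "(\<Sum>v\<in>V. real (degree V E v)) \<le> (\<Sum>v\<in>V. real (max_degree V E))"
    by (intro sum_mono) (simp add: degree_le_max_degree)
  then show ?thesis
    using assms finite_V by (simp add: average_degree_def field_simps card_gt_0_iff)
qed

lemma almost_regular_max_degree_le:
  assumes "almost_regular K V E" "V \<noteq> {}" "0 \<le> K"
  shows "real (max_degree V E) \<le> K * average_degree V E"
  using assms min_degree_le_average_degree[OF assms(2)]
  by (auto simp: almost_regular_def intro: order_trans mult_left_mono)

lemma almost_regular_has_neighbour:
  assumes "almost_regular K V E" "V \<noteq> {}" "0 < average_degree V E" "x \<in> V"
  shows "\<exists>w. E x w"
proof -
  have "0 < real (max_degree V E)"
    using assms(3) average_degree_le_max_degree[OF assms(2)] by linarith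
  then have "0 < min_degree V E"
    using assms(1) by (cases "min_degree V E = 0") (auto simp: almost_regular_def)
  then have "0 < degree V E x"
    using min_degree_le_degree[OF assms(4)] by linarith
  then show ?thesis
    by (force simp: degree_def card_gt_0_iff)
qed

lemma closed_walks_total_eq_hom_count: "0 < m \<Longrightarrow> closed_walks_total m = real (hom_count m V E)"
  by (simp add: closed_walks_total_def hom_count_eq_sum_walk_count finite_V)

end

section \<open>Degenerate cycles in graphs without isolated vertices\<close>

locale sgraph_no_isolated = sgraph +
  assumes V_nonempty: "V \<noteq> {}"
    and has_neighbour: "x \<in> V \<Longrightarrow> \<exists>w. E x w"
begin

lemma closed_walks_total_even_pos: "0 < closed_walks_total (2 * j)"
  unfolding closed_walks_total_def using V_nonempty finite_V has_neighbour walk_count_even_self_pos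
  by (intro sum_pos) auto

lemma pos_log_convex_closed_walks_total: "pos_log_convex_seq (\<lambda>j. closed_walks_total (2 * j))"
  unfolding pos_log_convex_seq_def
  using closed_walks_total_even_pos closed_walks_total_sq_le[of j "Suc (Suc j)" for j] by (simp add: mult_2)

lemma pos_log_convex_walks_total: "pos_log_convex_seq (\<lambda>j. walks_total (2 * j))"
  unfolding pos_log_convex_seq_def
  using closed_walks_total_even_pos closed_walks_total_le_walks_total walks_total_sq_le[of j "Suc (Suc j)" for j]
  by (auto simp: mult_2 intro: less_le_trans)

lemma average_degree_pos: "0 < average_degree V E"
proof -
  have "0 < degree V E v" if "v \<in> V" for v
    using has_neighbour[OF that] adj_in_V finite_V by (auto simp: degree_def card_gt_0_iff)
  then have "0 < (\<Sum>v\<in>V. real (degree V E v))"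
    using V_nonempty finite_V by (intro sum_pos) auto
  then show ?thesis
    using V_nonempty finite_V by (simp add: average_degree_def card_gt_0_iff)
qed

lemma average_degree_pow_le_closed_walks_total:
  "average_degree V E ^ (2 * k) \<le> closed_walks_total (2 * k)"
proof -
  define n where "n = real (card V)"
  define d where "d = average_degree V E"
  have n_pos: "0 < n" using V_nonempty finite_V by (simp add: n_def card_gt_0_iff)
  have "(\<Sum>w\<in>V. real (degree V E w) * 1) ^ 2 \<le> (\<Sum>w\<in>V. real (degree V E w) ^ 2) * (\<Sum>w\<in>V. 1 ^ 2)"
    by (rule Cauchy_Schwarz_ineq_sum)
  moreover have "(\<Sum>w\<in>V. real (degree V E w)) = n * d"
    using n_pos by (simp add: n_def d_def average_degree_def)
  moreover have "walks_total (2 * 1) = (\<Sum>w\<in>V. real (degree V E w) ^ 2)"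
    using walks_total_2 by simp
  ultimately have "d ^ 2 \<le> walks_total (2 * 1) / n"
    using n_pos by (simp add: n_def field_simps power2_eq_square)
  then have "n * (d ^ 2) ^ k \<le> n * (walks_total (2 * 1) / n) ^ k"
    using n_pos by (simp add: power_mono)
  also have "\<dots> \<le> walks_total (2 * k)"
    using pos_log_convex_seq_ge_geometric[OF pos_log_convex_walks_total, of k] by (simp add: walks_total_0 n_def)
  also have "\<dots> \<le> n * closed_walks_total (2 * k)"
    unfolding n_def by (rule walks_total_le_closed_walks_total)
  finally show ?thesis
    using n_pos by (simp add: d_def power_mult)
qed

lemma card_hom_cycles_repeat_le:
  assumes "i < j" "j < m" "even m"
  shows "real (card {f \<in> hom_cycles m V E. f i = f j}) \<le> real (max_degree V E) * closed_walks_total (m - 2)"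
proof -
  have "real (card {f \<in> hom_cycles m V E. f i = f j})
      = (\<Sum>x\<in>V. walk_count V E (j - i) x x * walk_count V E (m - (j - i)) x x)"
    using card_hom_cycles_repeat[OF finite_V assms(1,2)] .
  also have "\<dots> \<le> (\<Sum>x\<in>V. real (max_degree V E) * walk_count V E (m - 2) x x)"
  proof (rule sum_mono)
    fix x assume "x \<in> V"
    then obtain w where "E x w" using has_neighbour by blast
    then have "walk_count V E (j - i) x x * walk_count V E (m - (j - i)) x x
        \<le> real (degree V E x) * walk_count V E (m - 2) x x"
      using walk_count_self_mult_le[of x w "j - i" "m - (j - i)"] assms by simp
    also have "\<dots> \<le> real (max_degree V E) * walk_count V E (m - 2) x x"
      using degree_le_max_degree[OF \<open>x \<in> V\<close>] by (intro mult_right_mono) (auto simp: walk_count_nonneg)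
    finally show "walk_count V E (j - i) x x * walk_count V E (m - (j - i)) x x
        \<le> real (max_degree V E) * walk_count V E (m - 2) x x" .
  qed
  also have "\<dots> = real (max_degree V E) * closed_walks_total (m - 2)"
    by (simp add: closed_walks_total_def sum_distrib_left)
  finally show ?thesis .
qed

lemma card_degenerate_hom_cycles_le:
  assumes "even m"
  shows "real (card (degenerate_hom_cycles m V E))
           \<le> real m ^ 2 * (real (max_degree V E) * closed_walks_total (m - 2))"
proof -
  let ?P = "{(i, j) \<in> {0..<m} \<times> {0..<m}. i < j}"
  let ?rep = "\<lambda>(i, j). {f \<in> hom_cycles m V E. f i = f j}"
  have "degenerate_hom_cycles m V E \<subseteq> (\<Union>p\<in>?P. ?rep p)"
    by (rule degenerate_hom_cycles_subset)
  moreover have "finite (\<Union>p\<in>?P. ?rep p)"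
    by (rule finite_subset[OF _ finite_hom_cycles[OF finite_V]]) auto
  ultimately have "card (degenerate_hom_cycles m V E) \<le> card (\<Union>p\<in>?P. ?rep p)"
    by (intro card_mono)
  also have "\<dots> \<le> (\<Sum>p\<in>?P. card (?rep p))"
    by (rule card_UN_le) (auto intro: finite_subset[of _ "{0..<m} \<times> {0..<m}"])
  finally have "real (card (degenerate_hom_cycles m V E)) \<le> (\<Sum>p\<in>?P. real (card (?rep p)))"
    by (simp flip: of_nat_sum)
  also have "\<dots> \<le> (\<Sum>p\<in>?P. real (max_degree V E) * closed_walks_total (m - 2))"
  proof (rule sum_mono)
    fix p assume "p \<in> ?P"
    then obtain i j where "p = (i, j)" "i < j" "j < m" by auto
    then show "real (card (?rep p)) \<le> real (max_degree V E) * closed_walks_total (m - 2)"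
      using card_hom_cycles_repeat_le assms by simp
  qed
  also have "\<dots> \<le> real m ^ 2 * (real (max_degree V E) * closed_walks_total (m - 2))"
  proof -
    have "card ?P \<le> card ({0..<m} \<times> {0..<m})" by (intro card_mono) auto
    then have "real (card ?P) \<le> real m ^ 2" by (simp add: power2_eq_square flip: of_nat_mult)
    moreover have "0 \<le> closed_walks_total (m - 2)"
      by (simp add: closed_walks_total_def sum_nonneg walk_count_nonneg)
    ultimately show ?thesis by (simp add: mult_right_mono)
  qed
  finally show ?thesis .
qed

lemma closed_walks_total_ratio_ge:
  assumes "1 \<le> k" and density: "average_degree V E ^ k = C ^ k * real (card V)"
  shows "C * average_degree V E \<le> closed_walks_total (2 * k) / closed_walks_total (2 * k - 2)"
proof -
  define d where "d = average_degree V E"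
  define T where "T j = closed_walks_total (2 * j)" for j
  define \<rho> where "\<rho> = T k / T (k - 1)"
  have "0 < T j" for j by (simp add: T_def closed_walks_total_even_pos)
  then have "0 < \<rho>" by (simp add: \<rho>_def)
  have "(C * d) ^ k * real (card V) = d ^ k * (C ^ k * real (card V))"
    by (simp add: power_mult_distrib)
  also have "\<dots> = d ^ (2 * k)"
    using density by (simp add: d_def mult_2 power_add)
  also have "\<dots> \<le> T k"
    unfolding d_def T_def by (rule average_degree_pow_le_closed_walks_total)
  also have "\<dots> \<le> T 0 * \<rho> ^ k"
    using pos_log_convex_seq_le_geometric[OF pos_log_convex_closed_walks_total, of k "k - 1"] assms(1)
    by (simp add: T_def \<rho>_def)
  finally have "(C * d) ^ k \<le> \<rho> ^ k"
    using V_nonempty finite_V by (simp add: T_def closed_walks_total_0 card_gt_0_iff mult.commute)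
  then have "C * d \<le> \<rho>"
    using power_le_imp_le_base[of "C * d" "k - 1" \<rho>] \<open>0 < \<rho>\<close> assms(1) by simp
  then show ?thesis
    using assms(1) by (simp add: d_def \<rho>_def T_def right_diff_distrib')
qed

lemma max_degree_mult_closed_walks_total_le:
  assumes "1 \<le> k" "0 < C"
    and max_degree: "real (max_degree V E) \<le> K * average_degree V E"
    and density: "average_degree V E ^ k = C ^ k * real (card V)"
  shows "real (max_degree V E) * closed_walks_total (2 * k - 2) \<le> K / C * closed_walks_total (2 * k)"
proof -
  define d where "d = average_degree V E"
  define T where "T m = closed_walks_total m" for m
  have d_pos: "0 < d" using average_degree_pos by (simp add: d_def)
  have T_pos: "0 < T (2 * k)" "0 < T (2 * k - 2)"
    using closed_walks_total_even_pos[of k] closed_walks_total_even_pos[of "k - 1"]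
    by (simp_all add: T_def right_diff_distrib')
  have "real (max_degree V E) * T (2 * k - 2) = real (max_degree V E) * T (2 * k) / (T (2 * k) / T (2 * k - 2))"
    using T_pos by simp
  also have "\<dots> \<le> K * d * T (2 * k) / (C * d)"
  proof (rule frac_le)
    have "0 \<le> K * d" using max_degree unfolding d_def by (metis of_nat_0_le_iff order_trans)
    then show "0 \<le> K * d * T (2 * k)" using T_pos by simp
    show "real (max_degree V E) * T (2 * k) \<le> K * d * T (2 * k)"
      using max_degree T_pos by (simp add: d_def)
    show "0 < C * d" using d_pos \<open>0 < C\<close> by simp
    show "C * d \<le> T (2 * k) / T (2 * k - 2)"
      unfolding d_def T_def by (rule closed_walks_total_ratio_ge[OF assms(1) density])
  qed
  also have "\<dots> = K / C * T (2 * k)"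
    using d_pos by simp
  finally show ?thesis by (simp add: T_def)
qed

end

lemma square_le_two_pow_Suc: "k ^ 2 \<le> (2 :: nat) ^ Suc k"
proof (induction k)
  case (Suc k)
  show ?case
  proof (cases "k \<le> 2")
    case True
    then have "k = 0 \<or> k = 1 \<or> k = 2" by auto
    then show ?thesis by (auto simp: power2_eq_square)
  next
    case False
    have "3 * k \<le> k ^ 2"
      unfolding power2_eq_square by (intro mult_right_mono) (use False in auto)
    moreover have "Suc k ^ 2 = k ^ 2 + 2 * k + 1" by (simp add: power2_eq_square)
    ultimately have "Suc k ^ 2 \<le> 2 * k ^ 2" using False by linarith
    also have "\<dots> \<le> 2 ^ Suc (Suc k)" using Suc by simp
    finally show ?thesis .
  qed
qed simp

lemma square_mult_two_pow_le: "real (2 * k) ^ 2 * 2 ^ (3 * k + 5) \<le> (2 ^ (2 * k + 10) :: real) ^ 2"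
proof -
  have "real k ^ 2 \<le> 2 ^ Suc k"
    using square_le_two_pow_Suc[of k] by (metis of_nat_le_iff of_nat_numeral of_nat_power)
  then have "real (2 * k) ^ 2 * 2 ^ (3 * k + 5) \<le> 2 ^ 2 * 2 ^ Suc k * 2 ^ (3 * k + 5)"
    by (simp add: power_mult_distrib)
  also have "\<dots> = 2 ^ (2 + Suc k + (3 * k + 5))"
    by (simp only: power_add)
  also have "\<dots> \<le> 2 ^ ((2 * k + 10) * 2)"
    by (intro power_increasing) simp_all
  finally show ?thesis
    by (simp only: power_mult)
qed

lemma le_div_sqrt_mult:
  fixes X H B c C :: real
  assumes "X \<le> H" "X \<le> c / C * H" "c \<le> B ^ 2" "0 < C" "0 \<le> B" "0 \<le> H"
  shows "X \<le> B / sqrt C * H"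
proof (cases "sqrt C \<le> B")
  case True
  then have "1 * H \<le> B / sqrt C * H" using assms(4,6) by (intro mult_right_mono) simp_all
  then show ?thesis using assms(1) by linarith
next
  case False
  then have "c / C \<le> (B / sqrt C) ^ 2"
    using assms(3,4) by (simp add: power_divide divide_right_mono)
  also have "\<dots> \<le> B / sqrt C"
  proof -
    have "0 \<le> B / sqrt C" "B / sqrt C \<le> 1" using False assms(4,5) by simp_all
    then show ?thesis unfolding power2_eq_square by (metis mult_left_le_one_le)
  qed
  finally show ?thesis using assms(2,6) by (meson mult_right_mono order_trans)
qed

theorem lemma4p3:
  fixes V :: "'a set" and E :: "'a \<Rightarrow> 'a \<Rightarrow> bool" and k :: nat and C K :: real
  assumes "simple_graph V E"
    and "V \<noteq> {}"
    and "k \<ge> 1"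
    and "K = 2 ^ (3 * k + 5)"
    and "almost_regular K V E"
    and "C > 0"
    and "average_degree V E = C * real (card V) powr (1 / real k)"
  shows "real (card (degenerate_hom_cycles (2 * k) V E))
           \<le> 2 ^ (2 * k + 10) / sqrt C * real (hom_count (2 * k) V E)"
proof -
  interpret sgraph V E by (rule sgraph.intro) fact
  have n_pos: "0 < real (card V)" using assms(2) finite_V by (simp add: card_gt_0_iff)
  then have "0 < average_degree V E" using assms(6,7) by simp
  then interpret sgraph_no_isolated V E
    using assms(2,5) almost_regular_has_neighbour by unfold_locales auto
  have density: "average_degree V E ^ k = C ^ k * real (card V)"
    using n_pos assms(3,7) by (simp add: power_mult_distrib powr_realpow[symmetric] powr_powr)
  have "real (card (degenerate_hom_cycles (2 * k) V E))
      \<le> real (2 * k) ^ 2 * (real (max_degree V E) * closed_walks_total (2 * k - 2))"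
    using card_degenerate_hom_cycles_le[of "2 * k"] by simp
  also have "\<dots> \<le> real (2 * k) ^ 2 * (K / C * closed_walks_total (2 * k))"
    using max_degree_mult_closed_walks_total_le[OF assms(3,6) almost_regular_max_degree_le density] assms(2,4,5)
    by (intro mult_left_mono) auto
  also have "\<dots> = real (2 * k) ^ 2 * K / C * real (hom_count (2 * k) V E)"
    using assms(3) by (simp add: closed_walks_total_eq_hom_count)
  finally have "real (card (degenerate_hom_cycles (2 * k) V E)) \<le> \<dots>" .
  moreover have "real (2 * k) ^ 2 * K \<le> (2 ^ (2 * k + 10)) ^ 2"
    using assms(4) by (simp only: square_mult_two_pow_le)
  ultimately show ?thesis
    using card_degenerate_hom_cycles_le_hom_count[OF finite_V, of "2 * k" E] assms(6)
    by (intro le_div_sqrt_mult) (auto simp: mult.assoc)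
qed

end
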